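(* For every integer $n\ge 1$, $$\chi_i(Q_n)=\begin{cases} n+1 & \text{if } n=2^m-1 \text{ for some integer } m\ge 0,\\ n+2 & \text{otherwise.}\end{cases}$$
   Context: $Q_n$ is the $n$-dimensional hypercube: vertex set $\{0,1\}^n$, two vertices adjacent iff they differ in exactly one coordinate. An incidence of a graph $G$ is a pair $(v,e)$ with $v\in V(G)$, $e\in E(G)$ and $v\in e$. Two incidences $(v,e)$ and $(u,f)$ are adjacent if $v=u$, or $e=f$, or $vu\in\{e,f\}$. An incidence coloring assigns colors to all incidences so that adjacent incidences receive distinct colors. $\chi_i(G)$ is the least number of colors in an incidence coloring of $G$. *)

theory Defs
  imports Main
begin

text \<open>A simple graph is given by a vertex set V and a set E of 2-element vertex sets.\<close>

definition hypercube_vertices :: "nat \<Rightarrow> bool list set" where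
  "hypercube_vertices n = {xs. length xs = n}"

definition hypercube_edges :: "nat \<Rightarrow> bool list set set" where
  "hypercube_edges n = {{u, v} | u v. u \<in> hypercube_vertices n \<and> v \<in> hypercube_vertices n
      \<and> card {i. i < n \<and> u ! i \<noteq> v ! i} = 1}"

definition incidences :: "'a set \<Rightarrow> 'a set set \<Rightarrow> ('a \<times> 'a set) set" where
  "incidences V E = {(v, e). v \<in> V \<and> e \<in> E \<and> v \<in> e}"

definition incidence_adjacent :: "('a \<times> 'a set) \<Rightarrow> ('a \<times> 'a set) \<Rightarrow> bool" where
  "incidence_adjacent a b = (case a of (v, e) \<Rightarrow> case b of (u, f) \<Rightarrow>
      v = u \<or> e = f \<or> {v, u} \<in> {e, f})"

definition is_incidence_coloring :: "'a set \<Rightarrow> 'a set set \<Rightarrow> nat \<Rightarrow> ('a \<times> 'a set \<Rightarrow> nat) \<Rightarrow> bool" where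
  "is_incidence_coloring V E k c \<longleftrightarrow>
     (\<forall>a \<in> incidences V E. c a < k) \<and>
     (\<forall>a \<in> incidences V E. \<forall>b \<in> incidences V E. a \<noteq> b \<and> incidence_adjacent a b \<longrightarrow> c a \<noteq> c b)"

definition incidence_chromatic_number :: "'a set \<Rightarrow> 'a set set \<Rightarrow> nat" where
  "incidence_chromatic_number V E = (LEAST k. \<exists>c. is_incidence_coloring V E k c)"

end

theory Submission
  imports Defs "HOL-Computational_Algebra.Primes"
begin

text \<open>
  Lower bound: the n incidences at a vertex, together with an incidence pointing back to it
  from a neighbour, are pairwise adjacent, so n + 1 colours are needed. If n + 1 colours
  suffice, every vertex u misses exactly one colour on its own incidences and every incidence
  (v, vu) must carry that colour. Hence the vertices missing colour 0 form a perfect code of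
  Q_n, whose closed neighbourhoods partition the 2^n vertices, and n + 1 divides 2^n.

  Upper bound: write n + 1 = 2^p + m with m < 2^p and label every vertex by the XOR of the
  labels of its set coordinates, for two labellings of the directions by numbers below 2^p.
  The incidence (v, vu) gets either a low colour, the weight label of u, or a high colour
  2^p + s, where s \<le> m is a slot computed from the other label of u; the label of v and the
  direction decide which. Both kinds of colour depend only on u, while the low colours of the
  incidences at u are shifted by distinct nonzero weights and their high colours use pairwise
  distinct slots different from the slot of u. For m = 0 every incidence is low and this is
  the Hamming code colouring with n + 1 colours; otherwise n + 2 colours are used.
\<close>

unbundle bit_operations_syntax

section \<open>Bits of natural numbers\<close>

lemma bit_imp_exp_le:
  assumes "bit (x::nat) j"
  shows "2 ^ j \<le> x"
proof (rule ccontr)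
  assume "\<not> 2 ^ j \<le> x"
  then have "x div 2 ^ j = 0" by simp
  with assms show False by (simp add: bit_iff_odd)
qed

lemma finite_bits_nat: "finite {j. bit (x::nat) j}"
  by (rule finite_subset[of _ "{..<x}"])
    (auto dest!: bit_imp_exp_le intro: less_le_trans[OF less_exp])

lemma exists_bit_if_nonzero: "(x::nat) \<noteq> 0 \<Longrightarrow> \<exists>j. bit x j"
  using bit_eqI[of x 0] by auto

lemma xor_less_exp: "(a::nat) < 2 ^ p \<Longrightarrow> b < 2 ^ p \<Longrightarrow> a XOR b < 2 ^ p"
  by (metis take_bit_nat_eq_self_iff take_bit_xor)

lemma xor_cancel_left: "a XOR (a XOR b) = (b::nat)"
  by (simp flip: xor.assoc)

lemma xor_left_cancel_iff: "a XOR x = a XOR y \<longleftrightarrow> x = (y::nat)"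
  by (metis xor_cancel_left)

lemma less_imp_top_differing_bit:
  "(e::nat) < m \<Longrightarrow> \<exists>d. bit m d \<and> \<not> bit e d \<and> (\<forall>j>d. bit m j = bit e j)"
proof (induction m arbitrary: e rule: less_induct)
  case (less m)
  show ?case
  proof (cases "e div 2 = m div 2")
    case True
    then have "even e" "odd m" using less.prems by presburger+
    then show ?thesis using True
      by (intro exI[of _ 0]) (auto simp add: bit_0 bit_Suc gr0_conv_Suc)
  next
    case False
    then have "e div 2 < m div 2" using less.prems by (simp add: div_le_mono le_neq_implies_less)
    moreover have "m div 2 < m" using less.prems by simp
    ultimately obtain d where d: "bit (m div 2) d" "\<not> bit (e div 2) d"
      "\<forall>j>d. bit (m div 2) j = bit (e div 2) j" using less.IH by blast
    moreover have "bit m j = bit e j" if "Suc d < j" for j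
      using d(3) that by (cases j) (auto simp add: bit_Suc)
    ultimately show ?thesis by (intro exI[of _ "Suc d"]) (auto simp add: bit_Suc)
  qed
qed

section \<open>Bit patterns relative to a fixed number\<close>

definition submask :: "nat \<Rightarrow> nat \<Rightarrow> bool" where
  "submask m x \<longleftrightarrow> (\<forall>j. bit x j \<longrightarrow> bit m j)"

definition top_foreign_bit :: "nat \<Rightarrow> nat \<Rightarrow> nat" where
  "top_foreign_bit m x = Max {j. bit x j \<and> \<not> bit m j}"

definition foreign_prefix :: "nat \<Rightarrow> nat \<Rightarrow> nat" where
  "foreign_prefix m x = take_bit (Suc (top_foreign_bit m x)) x"

text \<open>At a vertex labelled z, a low direction x is determined by its foreign prefix, the part
  of x up to its highest bit outside m; the remaining directions are told apart by the slot of
  z XOR x.\<close>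

definition lower_direction :: "nat \<Rightarrow> nat \<Rightarrow> nat \<Rightarrow> bool" where
  "lower_direction m z x \<longleftrightarrow> \<not> submask m x \<and>
     (\<forall>j > top_foreign_bit m x. bit x j \<longleftrightarrow> bit z j \<and> bit m j)"

definition top_common_bit :: "nat \<Rightarrow> nat \<Rightarrow> nat" where
  "top_common_bit m u = Max {j. bit u j \<and> bit m j}"

text \<open>The numbers whose highest bit in common with m is k get the slots take_bit k m + 1, ...,
  take_bit (Suc k) m; for different k these ranges are disjoint subsets of {1..m}.\<close>

definition slot :: "nat \<Rightarrow> nat \<Rightarrow> nat" where
  "slot m u = (if \<forall>j. bit u j \<longrightarrow> \<not> bit m j then 0
     else Suc (take_bit (top_common_bit m u) m + take_bit (top_common_bit m u) u))"

lemma top_foreign_bitD: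
  assumes "\<not> submask m x"
  shows "bit x (top_foreign_bit m x)" "\<not> bit m (top_foreign_bit m x)"
    and "\<And>j. bit x j \<Longrightarrow> \<not> bit m j \<Longrightarrow> j \<le> top_foreign_bit m x"
proof -
  have fin: "finite {j. bit x j \<and> \<not> bit m j}" by (simp add: finite_bits_nat)
  have "{j. bit x j \<and> \<not> bit m j} \<noteq> {}" using assms by (auto simp: submask_def)
  from Max_in[OF fin this] show "bit x (top_foreign_bit m x)" "\<not> bit m (top_foreign_bit m x)"
    by (auto simp: top_foreign_bit_def)
  show "\<And>j. bit x j \<Longrightarrow> \<not> bit m j \<Longrightarrow> j \<le> top_foreign_bit m x"
    unfolding top_foreign_bit_def by (rule Max_ge[OF fin]) auto
qed

lemma top_common_bitD:
  assumes "\<not> (\<forall>j. bit u j \<longrightarrow> \<not> bit m j)"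
  shows "bit u (top_common_bit m u)" "bit m (top_common_bit m u)"
    and "\<And>j. bit u j \<Longrightarrow> bit m j \<Longrightarrow> j \<le> top_common_bit m u"
proof -
  have fin: "finite {j. bit u j \<and> bit m j}" by (simp add: finite_bits_nat)
  have "{j. bit u j \<and> bit m j} \<noteq> {}" using assms by auto
  from Max_in[OF fin this] show "bit u (top_common_bit m u)" "bit m (top_common_bit m u)"
    by (auto simp: top_common_bit_def)
  show "\<And>j. bit u j \<Longrightarrow> bit m j \<Longrightarrow> j \<le> top_common_bit m u"
    unfolding top_common_bit_def by (rule Max_ge[OF fin]) auto
qed

lemma slot_le_take_bit:
  assumes "\<forall>j>k. bit m j \<longrightarrow> \<not> bit u j"
  shows "slot m u \<le> take_bit (Suc k) m"
proof (cases "\<forall>j. bit u j \<longrightarrow> \<not> bit m j")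
  case True
  then show ?thesis by (simp add: slot_def)
next
  case False
  let ?k = "top_common_bit m u"
  have bk: "bit m ?k" "bit u ?k" using top_common_bitD[OF False] by auto
  then have "?k \<le> k" using assms by (meson not_le)
  have "Suc (take_bit ?k m + take_bit ?k u) \<le> take_bit ?k m + 2 ^ ?k"
    using take_bit_nat_less_exp[of ?k u] by linarith
  also have "\<dots> = take_bit (Suc ?k) m" using bk by (simp add: take_bit_Suc_from_most)
  also have "\<dots> \<le> take_bit (Suc k) m"
    using \<open>?k \<le> k\<close> by (simp add: take_bit_tightened_less_eq_nat)
  finally show ?thesis using False by (simp add: slot_def)
qed

lemma slot_le: "slot m u \<le> m"
proof -
  have "j < m" if "bit m j" for j
    using bit_imp_exp_le[OF that] less_exp[of j] by linarith
  then have "\<forall>j>m. bit m j \<longrightarrow> \<not> bit u j" by fastforce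
  then have "slot m u \<le> take_bit (Suc m) m" by (rule slot_le_take_bit)
  then show ?thesis using take_bit_nat_less_eq_self[of "Suc m" m] by linarith
qed

lemma slot_eq_imp_agree_below:
  assumes "slot m u = slot m w"
  obtains t where "\<forall>j<t. bit u j = bit w j" and "\<forall>j\<ge>t. bit m j \<longrightarrow> \<not> bit u j \<and> \<not> bit w j"
proof (cases "\<forall>j. bit u j \<longrightarrow> \<not> bit m j")
  case True
  then have "\<forall>j. bit w j \<longrightarrow> \<not> bit m j"
    using assms by (auto simp: slot_def split: if_splits)
  with True show ?thesis by (intro that[of 0]) auto
next
  case u_meets: False
  then have w_meets: "\<not> (\<forall>j. bit w j \<longrightarrow> \<not> bit m j)"
    using assms by (auto simp: slot_def split: if_splits)
  define k where "k = top_common_bit m u"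
  have top_mono: "top_common_bit m x \<le> top_common_bit m y"
    if "slot m x \<le> slot m y" "\<not> (\<forall>j. bit x j \<longrightarrow> \<not> bit m j)"
      "\<not> (\<forall>j. bit y j \<longrightarrow> \<not> bit m j)" for x y
  proof (rule ccontr)
    let ?a = "top_common_bit m y" and ?b = "top_common_bit m x"
    assume "\<not> ?b \<le> ?a"
    have "\<forall>j>?a. bit m j \<longrightarrow> \<not> bit y j" using top_common_bitD(3)[OF that(3)] by (meson not_le)
    then have "slot m y \<le> take_bit (Suc ?a) m" by (rule slot_le_take_bit)
    also have "\<dots> \<le> take_bit ?b m"
      using \<open>\<not> ?b \<le> ?a\<close> by (simp add: take_bit_tightened_less_eq_nat)
    also have "\<dots> < slot m x" using that(2) by (simp add: slot_def)
    finally show False using that(1) by simp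
  qed
  have "top_common_bit m w = k"
    using top_mono[of u w] top_mono[of w u] assms u_meets w_meets by (simp add: k_def)
  then have "take_bit k u = take_bit k w"
    using assms u_meets w_meets by (simp add: slot_def k_def)
  then have low: "bit u j = bit w j" if "j < k" for j
    using that by (metis bit_take_bit_iff)
  show ?thesis
  proof (rule that[of "Suc k"])
    show "\<forall>j<Suc k. bit u j = bit w j"
      using low top_common_bitD(1)[OF u_meets] top_common_bitD(1)[OF w_meets]
        \<open>top_common_bit m w = k\<close> k_def less_Suc_eq by auto
    show "\<forall>j\<ge>Suc k. bit m j \<longrightarrow> \<not> bit u j \<and> \<not> bit w j"
      using top_common_bitD(3)[OF u_meets] top_common_bitD(3)[OF w_meets]
        \<open>top_common_bit m w = k\<close> k_def by fastforce
  qed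
qed

lemma not_lower_direction_high_bit:
  assumes "\<not> lower_direction m z x" "\<forall>j\<ge>t. bit m j \<longrightarrow> \<not> bit (z XOR x) j"
    and "t \<le> j" "\<not> bit m j"
  shows "\<not> bit x j"
proof
  assume bx: "bit x j"
  then have foreign: "\<not> submask m x" using assms(4) by (auto simp: submask_def)
  note top = top_foreign_bitD[OF foreign]
  have "j \<le> top_foreign_bit m x" using top(3) bx assms(4) .
  have "bit x i = (bit z i \<and> bit m i)" if i: "top_foreign_bit m x < i" for i
  proof (cases "bit m i")
    case True
    then have "\<not> bit (z XOR x) i" using assms(2,3) i \<open>j \<le> top_foreign_bit m x\<close> by auto
    then show ?thesis using True by (auto simp: bit_xor_iff)
  next
    case False
    then show ?thesis using top(3) i by fastforce
  qed
  then show False using assms(1) foreign by (simp add: lower_direction_def)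
qed

lemma slot_xor_inj:
  assumes "\<not> lower_direction m z x" "\<not> lower_direction m z y"
    and "slot m (z XOR x) = slot m (z XOR y)"
  shows "x = y"
proof -
  obtain t where below: "\<forall>j<t. bit (z XOR x) j = bit (z XOR y) j"
    and above: "\<forall>j\<ge>t. bit m j \<longrightarrow> \<not> bit (z XOR x) j \<and> \<not> bit (z XOR y) j"
    using slot_eq_imp_agree_below[OF assms(3)] by blast
  show ?thesis
  proof (rule bit_eqI)
    fix j
    consider "j < t" | "t \<le> j" "bit m j" | "t \<le> j" "\<not> bit m j" by linarith
    then show "bit x j = bit y j"
    proof cases
      case 1
      then show ?thesis using below by (auto simp: bit_xor_iff)
    next
      case 2
      then show ?thesis using above by (auto simp: bit_xor_iff)
    next
      case 3
      then show ?thesis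
        using not_lower_direction_high_bit[OF assms(1)] not_lower_direction_high_bit[OF assms(2)]
          above by blast
    qed
  qed
qed

lemma foreign_prefixD:
  assumes "\<not> submask m x"
  shows "bit (foreign_prefix m x) (top_foreign_bit m x)"
    and "\<And>j. bit (foreign_prefix m x) j \<Longrightarrow> j \<le> top_foreign_bit m x"
  using top_foreign_bitD[OF assms] by (auto simp: foreign_prefix_def bit_take_bit_iff)

lemma foreign_prefix_le: "foreign_prefix m x \<le> x"
  by (simp add: foreign_prefix_def)

lemma foreign_prefix_inj:
  assumes "lower_direction m z x" "lower_direction m z y"
    and "foreign_prefix m x = foreign_prefix m y"
  shows "x = y"
proof -
  have x: "\<not> submask m x" and y: "\<not> submask m y"
    using assms(1,2) by (auto simp: lower_direction_def)
  have top: "top_foreign_bit m x = top_foreign_bit m y"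
    using foreign_prefixD[OF x] foreign_prefixD[OF y] assms(3) by (metis le_antisym)
  show ?thesis
  proof (rule bit_eqI)
    fix j
    show "bit x j = bit y j"
    proof (cases "j \<le> top_foreign_bit m x")
      case True
      then show ?thesis using arg_cong[OF assms(3), of "\<lambda>v. bit v j"] top
        by (simp add: foreign_prefix_def bit_take_bit_iff)
    next
      case False
      then show ?thesis using assms(1,2) top by (simp add: lower_direction_def)
    qed
  qed
qed

lemma foreign_prefix_ne_xor:
  assumes "e < m" "\<not> submask m x"
  shows "foreign_prefix m x \<noteq> m XOR e"
proof
  assume eq: "foreign_prefix m x = m XOR e"
  obtain d where d: "bit m d" "\<not> bit e d" "\<forall>j>d. bit m j = bit e j"
    using less_imp_top_differing_bit[OF assms(1)] by blast
  have "bit (foreign_prefix m x) d" using d eq by (simp add: bit_xor_iff)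
  then have "d \<le> top_foreign_bit m x" using foreign_prefixD(2)[OF assms(2)] by blast
  moreover have "\<not> d < top_foreign_bit m x"
  proof
    assume "d < top_foreign_bit m x"
    then have "\<not> bit (m XOR e) (top_foreign_bit m x)" using d(3) by (simp add: bit_xor_iff)
    then show False using foreign_prefixD(1)[OF assms(2)] eq by simp
  qed
  ultimately have "d = top_foreign_bit m x" by simp
  then show False using d(1) top_foreign_bitD(2)[OF assms(2)] by simp
qed

lemma foreign_prefix_nonzero:
  assumes "\<not> submask m x"
  shows "foreign_prefix m x \<noteq> 0"
proof
  assume "foreign_prefix m x = 0"
  then show False using foreign_prefixD(1)[OF assms] by simp
qed

lemma lower_direction_zero_mask: "x \<noteq> 0 \<Longrightarrow> lower_direction 0 z x"
  using exists_bit_if_nonzero[of x] top_foreign_bitD(3)[of 0 x]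
  by (fastforce simp: lower_direction_def submask_def)

lemma not_lower_direction_zero: "\<not> lower_direction m z 0"
  by (simp add: lower_direction_def submask_def)

section \<open>Vertices, edges and incidences of the hypercube\<close>

definition flip :: "bool list \<Rightarrow> nat \<Rightarrow> bool list" where
  "flip v i = v[i := \<not> v ! i]"

lemma length_flip [simp]: "length (flip v i) = length v"
  by (simp add: flip_def)

lemma nth_flip: "i < length v \<Longrightarrow> flip v i ! j = (if j = i then \<not> v ! i else v ! j)"
  by (simp add: flip_def nth_list_update)

lemma flip_neq: "i < length v \<Longrightarrow> flip v i \<noteq> v"
  by (metis flip_def nth_list_update_eq)

lemma flip_flip [simp]: "i < length v \<Longrightarrow> flip (flip v i) i = v"
  by (simp add: flip_def list_update_same_conv)

lemma flip_eq_flip_iff: "i < length v \<Longrightarrow> j < length v \<Longrightarrow> flip v i = flip v j \<longleftrightarrow> i = j"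
  by (metis nth_flip)

lemma flip_edge_eq_iff:
  assumes "i < length v" "j < length v"
  shows "{v, flip v i} = {v, flip v j} \<longleftrightarrow> i = j"
  using assms flip_neq[OF assms(1)] flip_eq_flip_iff[OF assms] by (auto simp: doubleton_eq_iff)

lemma card_hypercube_vertices: "card (hypercube_vertices n) = 2 ^ n"
  using card_lists_length_eq[of "UNIV :: bool set" n] by (simp add: hypercube_vertices_def)

lemma finite_hypercube_vertices: "finite (hypercube_vertices n)"
  using finite_lists_length_eq[of "UNIV :: bool set" n] by (simp add: hypercube_vertices_def)

lemma flip_edge_in_hypercube_edges:
  assumes "length v = n" "i < n"
  shows "{v, flip v i} \<in> hypercube_edges n"
proof -
  have "{j. j < n \<and> v ! j \<noteq> flip v i ! j} = {i}"
    using assms by (auto simp: nth_flip)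
  then show ?thesis using assms unfolding hypercube_edges_def hypercube_vertices_def by force
qed

lemma hypercube_edge_at_vertex:
  assumes "e \<in> hypercube_edges n" "v \<in> e"
  shows "length v = n \<and> (\<exists>i<n. e = {v, flip v i})"
proof -
  have neighbour: "\<exists>i<n. y = flip x i"
    if xy: "length x = n" "length y = n" "card {i. i < n \<and> x ! i \<noteq> y ! i} = 1" for x y
  proof -
    obtain i where diff: "{i. i < n \<and> x ! i \<noteq> y ! i} = {i}"
      using xy(3) card_1_singletonE by blast
    then have "i < n" by blast
    moreover have "y = flip x i"
      by (rule nth_equalityI) (use xy diff \<open>i < n\<close> in \<open>auto simp: nth_flip\<close>)
    ultimately show ?thesis by blast
  qed
  obtain a b where e: "e = {a, b}" and "length a = n" "length b = n"
    and "card {i. i < n \<and> a ! i \<noteq> b ! i} = 1"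
    using assms(1) unfolding hypercube_edges_def hypercube_vertices_def by blast
  moreover have "{i. i < n \<and> b ! i \<noteq> a ! i} = {i. i < n \<and> a ! i \<noteq> b ! i}" by auto
  ultimately show ?thesis
    using assms(2) neighbour[of a b] neighbour[of b a] by (auto simp: insert_commute)
qed

definition edge_direction :: "bool list \<Rightarrow> bool list set \<Rightarrow> nat" where
  "edge_direction v e = (THE i. i < length v \<and> e = {v, flip v i})"

lemma edge_direction_flip_edge: "i < length v \<Longrightarrow> edge_direction v {v, flip v i} = i"
  unfolding edge_direction_def by (rule the_equality) (auto simp: flip_edge_eq_iff)

lemma flip_edge_in_incidences:
  assumes "length v = n" "i < n"
  shows "(v, {v, flip v i}) \<in> incidences (hypercube_vertices n) (hypercube_edges n)"
  using assms flip_edge_in_hypercube_edges by (auto simp: incidences_def hypercube_vertices_def)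

text \<open>A direction colouring assigns to every vertex v and direction i the colour of the
  incidence (v, {v, flip v i}).\<close>

definition hypercube_direction_coloring :: "nat \<Rightarrow> nat \<Rightarrow> (bool list \<Rightarrow> nat \<Rightarrow> nat) \<Rightarrow> bool" where
  "hypercube_direction_coloring n k col \<longleftrightarrow>
     (\<forall>v i. length v = n \<longrightarrow> i < n \<longrightarrow> col v i < k \<and>
        (\<forall>j<n. (i \<noteq> j \<longrightarrow> col v i \<noteq> col v j) \<and> col v i \<noteq> col (flip v i) j))"

lemma direction_coloringD:
  assumes "hypercube_direction_coloring n k col" "length v = n" "i < n" "j < n"
  shows "col v i < k" "i \<noteq> j \<Longrightarrow> col v i \<noteq> col v j" "col v i \<noteq> col (flip v i) j"
  using assms unfolding hypercube_direction_coloring_def by blast+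

lemma incidence_coloring_of_direction_coloring:
  assumes "hypercube_direction_coloring n k col"
  shows "is_incidence_coloring (hypercube_vertices n) (hypercube_edges n) k
           (\<lambda>(v, e). col v (edge_direction v e))"
proof -
  let ?I = "incidences (hypercube_vertices n) (hypercube_edges n)"
  let ?c = "\<lambda>(v, e). col v (edge_direction v e)"
  note col = direction_coloringD[OF assms]
  have incidence: "\<exists>i<n. e = {v, flip v i} \<and> ?c (v, e) = col v i \<and> length v = n"
    if ve: "(v, e) \<in> ?I" for v e
  proof -
    obtain i where "i < n" "e = {v, flip v i}" "length v = n"
      using ve hypercube_edge_at_vertex[of e n v] by (auto simp: incidences_def)
    then show ?thesis by (auto simp: edge_direction_flip_edge)
  qed
  have distinct: "?c (v, e) \<noteq> ?c (u, f)"
    if ab: "(v, e) \<in> ?I" "(u, f) \<in> ?I" "(v, e) \<noteq> (u, f)" "incidence_adjacent (v, e) (u, f)"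
    for v e u f
  proof -
    obtain i where a: "e = {v, flip v i}" "?c (v, e) = col v i" "i < n" "length v = n"
      using incidence ab(1) by blast
    obtain j where b: "f = {u, flip u j}" "?c (u, f) = col u j" "j < n" "length u = n"
      using incidence ab(2) by blast
    have "flip v i \<noteq> v" "flip u j \<noteq> u" using a(3,4) b(3,4) by (simp_all add: flip_neq)
    then consider "v = u" "i \<noteq> j" | "u = flip v i" | "v = flip u j"
      using ab(3,4) a b by (auto simp: incidence_adjacent_def doubleton_eq_iff)
    then show ?thesis
    proof cases
      case 1
      then show ?thesis using a b col(2) by simp
    next
      case 2
      then show ?thesis using a b col(3) by simp
    next
      case 3
      then show ?thesis using a b col(3)[of u j i] by simp
    qed
  qed
  show ?thesis
    unfolding is_incidence_coloring_def
  proof (intro conjI ballI impI)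
    fix a assume "a \<in> ?I"
    then show "?c a < k" using incidence col(1) by (cases a) fastforce
  next
    fix a b assume "a \<in> ?I" "b \<in> ?I" "a \<noteq> b \<and> incidence_adjacent a b"
    then show "?c a \<noteq> ?c b" using distinct by (cases a, cases b) blast
  qed
qed

lemma direction_coloring_of_incidence_coloring:
  assumes "is_incidence_coloring (hypercube_vertices n) (hypercube_edges n) k c"
  shows "hypercube_direction_coloring n k (\<lambda>v i. c (v, {v, flip v i}))"
  unfolding hypercube_direction_coloring_def
proof (intro allI impI conjI)
  let ?I = "incidences (hypercube_vertices n) (hypercube_edges n)"
  fix v :: "bool list" and i j assume v: "length v = n" and i: "i < n" and j: "j < n"
  have inc: "(v, {v, flip v i}) \<in> ?I" "(v, {v, flip v j}) \<in> ?I"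
    "(flip v i, {flip v i, flip (flip v i) j}) \<in> ?I"
    using v i j flip_edge_in_incidences by auto
  with assms show "c (v, {v, flip v i}) < k" by (simp add: is_incidence_coloring_def)
  show "c (v, {v, flip v i}) \<noteq> c (v, {v, flip v j})" if "i \<noteq> j"
    using assms inc that v i j unfolding is_incidence_coloring_def
    by (auto simp: incidence_adjacent_def flip_edge_eq_iff)
  show "c (v, {v, flip v i}) \<noteq> c (flip v i, {flip v i, flip (flip v i) j})"
    using assms inc flip_neq[of i v] v i unfolding is_incidence_coloring_def
    by (auto simp: incidence_adjacent_def)
qed

section \<open>Lower bounds\<close>

lemma direction_coloring_ge_succ:
  assumes "1 \<le> n" "hypercube_direction_coloring n k col"
  shows "n + 1 \<le> k"
proof -
  define v :: "bool list" where "v = replicate n False"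
  have v: "length v = n" "length (flip v 0) = n" by (simp_all add: v_def)
  define f where "f i = (if i < n then col v i else col (flip v 0) 0)" for i
  have "inj_on f {..<Suc n}"
  proof (rule inj_onI)
    fix i j assume ij: "i \<in> {..<Suc n}" "j \<in> {..<Suc n}" "f i = f j"
    have "col v i \<noteq> col (flip v 0) 0" if "i < n" for i
      using direction_coloringD(3)[OF assms(2) v(2), of 0 i] assms(1) v that by simp
    then show "i = j"
      using ij direction_coloringD(2)[OF assms(2) v(1)] unfolding f_def
      by (cases "i < n"; cases "j < n") (auto simp: less_Suc_eq)
  qed
  moreover have "f ` {..<Suc n} \<subseteq> {..<k}"
    using direction_coloringD(1)[OF assms(2) v(1)] direction_coloringD(1)[OF assms(2) v(2), of 0 0]
      assms(1) by (auto simp: f_def)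
  ultimately show ?thesis using card_inj_on_le[of f "{..<Suc n}" "{..<k}"] by simp
qed

lemma tight_direction_coloring_missing_color:
  assumes "hypercube_direction_coloring n (n + 1) col" "length v = n" "i < n"
  shows "col (flip v i) ` {..<n} = {..<n + 1} - {col v i}"
proof (rule card_subset_eq)
  have u: "length (flip v i) = n" using assms(2) by simp
  show "col (flip v i) ` {..<n} \<subseteq> {..<n + 1} - {col v i}"
    using direction_coloringD(1)[OF assms(1) u] direction_coloringD(3)[OF assms(1,2,3)] by fastforce
  have "inj_on (col (flip v i)) {..<n}"
    by (rule inj_onI) (use direction_coloringD(2)[OF assms(1) u] in blast)
  moreover have "col v i < n + 1" using direction_coloringD(1)[OF assms assms(3)] .
  ultimately show "card (col (flip v i) ` {..<n}) = card ({..<n + 1} - {col v i})"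
    by (simp add: card_image)
qed simp

lemma hypercube_perfect_code_card:
  assumes "C \<subseteq> hypercube_vertices n"
    and "\<And>v. length v = n \<Longrightarrow> card {i. i < n \<and> flip v i \<in> C} = (if v \<in> C then 0 else 1)"
  shows "card C * (n + 1) = 2 ^ n"
proof -
  let ?V = "hypercube_vertices n"
  define B where "B v = {i. i < n \<and> flip v i \<in> C}" for v
  have "card (Sigma ?V B) = (\<Sum>v\<in>?V. card (B v))"
    by (rule card_SigmaI) (auto simp: finite_hypercube_vertices B_def)
  also have "\<dots> = (\<Sum>v\<in>?V. if v \<in> C then 0 else 1)"
    using assms(2) by (intro sum.cong) (auto simp: B_def hypercube_vertices_def)
  also have "\<dots> = card (?V - C)"
    using finite_hypercube_vertices by (simp add: sum.If_cases Diff_eq)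
  also have "\<dots> = 2 ^ n - card C"
    using assms(1) finite_hypercube_vertices
    by (simp add: card_Diff_subset finite_subset card_hypercube_vertices)
  finally have pairs: "card (Sigma ?V B) = 2 ^ n - card C" .
  have "bij_betw (\<lambda>(v, i). (flip v i, i)) (Sigma ?V B) (C \<times> {..<n})"
  proof (rule bij_betw_byWitness[where f' = "\<lambda>(u, i). (flip u i, i)"])
    show "\<forall>a\<in>Sigma ?V B. (\<lambda>(u, i). (flip u i, i)) ((\<lambda>(v, i). (flip v i, i)) a) = a"
      by (auto simp: B_def hypercube_vertices_def)
    show "\<forall>a\<in>C \<times> {..<n}. (\<lambda>(v, i). (flip v i, i)) ((\<lambda>(u, i). (flip u i, i)) a) = a"
      using assms(1) by (auto simp: hypercube_vertices_def)
    show "(\<lambda>(v, i). (flip v i, i)) ` Sigma ?V B \<subseteq> C \<times> {..<n}"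
      by (auto simp: B_def)
    show "(\<lambda>(u, i). (flip u i, i)) ` (C \<times> {..<n}) \<subseteq> Sigma ?V B"
      using assms(1) by (auto simp: B_def hypercube_vertices_def)
  qed
  then have "card (Sigma ?V B) = card C * n"
    by (simp add: bij_betw_same_card card_cartesian_product)
  moreover have "card C \<le> 2 ^ n"
    using assms(1) card_mono[OF finite_hypercube_vertices] card_hypercube_vertices by metis
  ultimately show ?thesis using pairs by (simp add: algebra_simps)
qed

lemma exp_minus_one_if_succ_dvd_exp:
  assumes "n + 1 dvd (2::nat) ^ k"
  shows "\<exists>m. n = 2 ^ m - 1"
proof -
  obtain j where "normalize (n + 1) = 2 ^ j"
    using divides_primepow[OF two_is_prime_nat] assms by blast
  then show ?thesis by (intro exI[of _ j]) simp
qed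

lemma tight_direction_coloring_imp_exp_minus_one:
  assumes "hypercube_direction_coloring n (n + 1) col"
  shows "\<exists>m. n = 2 ^ m - 1"
proof -
  define C where "C = {u. length u = n \<and> 0 \<notin> col u ` {..<n}}"
  have code: "card {i. i < n \<and> flip v i \<in> C} = (if v \<in> C then 0 else 1)" if v: "length v = n" for v
  proof -
    have "flip v i \<in> C \<longleftrightarrow> col v i = 0" if "i < n" for i
      using tight_direction_coloring_missing_color[OF assms v that] v by (auto simp: C_def)
    then have "{i. i < n \<and> flip v i \<in> C} = {i \<in> {..<n}. col v i = 0}" by auto
    moreover have "inj_on (col v) {..<n}"
      by (rule inj_onI) (use direction_coloringD(2)[OF assms v] in blast)
    moreover have "{i \<in> {..<n}. col v i = 0} = {i}" if "i < n" "col v i = 0" for i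
      using that inj_onD[OF \<open>inj_on (col v) {..<n}\<close>] by auto
    ultimately show ?thesis
      using v by (auto simp: C_def)
  qed
  have "C \<subseteq> hypercube_vertices n" by (auto simp: C_def hypercube_vertices_def)
  then have "card C * (n + 1) = 2 ^ n" using code by (rule hypercube_perfect_code_card)
  then show ?thesis by (intro exp_minus_one_if_succ_dvd_exp[of n n]) (metis dvd_triv_right)
qed

section \<open>Colourings from XOR labellings\<close>

fun xor_label :: "(nat \<Rightarrow> nat) \<Rightarrow> bool list \<Rightarrow> nat" where
  "xor_label f [] = 0"
| "xor_label f (b # bs) = (if b then f 0 else 0) XOR xor_label (\<lambda>i. f (Suc i)) bs"

lemma xor_label_flip: "i < length v \<Longrightarrow> xor_label f (flip v i) = xor_label f v XOR f i"
proof (induction v arbitrary: f i)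
  case Nil
  then show ?case by simp
next
  case (Cons b bs)
  show ?case
  proof (cases i)
    case 0
    then show ?thesis
      by (auto simp: flip_def xor.assoc xor.commute xor.left_commute xor_cancel_left)
  next
    case (Suc k)
    then have "xor_label (\<lambda>i. f (Suc i)) (flip bs k) = xor_label (\<lambda>i. f (Suc i)) bs XOR f (Suc k)"
      using Cons by simp
    then show ?thesis using Suc by (simp add: flip_def xor.assoc)
  qed
qed

lemma xor_label_less_exp: "(\<And>i. i < length v \<Longrightarrow> f i < 2 ^ p) \<Longrightarrow> xor_label f v < 2 ^ p"
proof (induction v arbitrary: f)
  case Nil
  then show ?case by simp
next
  case (Cons b bs)
  have "xor_label (\<lambda>i. f (Suc i)) bs < 2 ^ p" using Cons by force
  moreover have "(if b then f 0 else 0) < (2::nat) ^ p" using Cons.prems by simp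
  ultimately show ?case by (simp add: xor_less_exp)
qed

lemma direction_coloring_from_xor_labels:
  fixes phi lam rank :: "nat \<Rightarrow> nat" and low :: "nat \<Rightarrow> nat \<Rightarrow> bool"
  assumes low_inj: "\<And>z i j. i < n \<Longrightarrow> j < n \<Longrightarrow> i \<noteq> j \<Longrightarrow> low z i \<Longrightarrow> low z j \<Longrightarrow> phi i \<noteq> phi j"
    and low_nonzero: "\<And>z i. i < n \<Longrightarrow> low z i \<Longrightarrow> phi i \<noteq> 0"
    and low_less: "\<And>i. i < n \<Longrightarrow> phi i < 2 ^ p"
    and high_neq: "\<And>z i. i < n \<Longrightarrow> \<not> low z i \<Longrightarrow> rank (z XOR lam i) \<noteq> rank z"
    and high_inj: "\<And>z i j. i < n \<Longrightarrow> j < n \<Longrightarrow> i \<noteq> j \<Longrightarrow> \<not> low z i \<Longrightarrow> \<not> low z j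
      \<Longrightarrow> rank (z XOR lam i) \<noteq> rank (z XOR lam j)"
    and high_less: "\<And>z i. i < n \<Longrightarrow> \<not> low z i \<Longrightarrow> rank (z XOR lam i) < S"
  shows "hypercube_direction_coloring n (2 ^ p + S)
    (\<lambda>v i. if low (xor_label lam v) i then xor_label phi v XOR phi i
           else 2 ^ p + rank (xor_label lam v XOR lam i))"
    (is "hypercube_direction_coloring n _ ?col")
  unfolding hypercube_direction_coloring_def
proof (intro allI impI conjI)
  fix v :: "bool list" and i j assume v: "length v = n" and i: "i < n" and j: "j < n"
  have low_colour: "?col w l < 2 ^ p" if "low (xor_label lam w) l" "length w = n" "l < n" for w l
    using that low_less xor_label_less_exp[of w phi p] by (simp add: xor_less_exp)
  have high_colour: "2 ^ p \<le> ?col w l" if "\<not> low (xor_label lam w) l" for w l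
    using that by simp
  show "?col v i < 2 ^ p + S"
    using low_colour[OF _ v i] high_less[OF i] by (cases "low (xor_label lam v) i") auto
  show "?col v i \<noteq> ?col v j" if "i \<noteq> j"
    using low_colour[OF _ v] high_colour low_inj[OF i j that] high_inj[OF i j that] i j
    by (cases "low (xor_label lam v) i"; cases "low (xor_label lam v) j")
      (fastforce simp: xor_left_cancel_iff)+
  let ?u = "flip v i"
  have u: "length ?u = n" "xor_label phi ?u = xor_label phi v XOR phi i"
    "xor_label lam ?u = xor_label lam v XOR lam i"
    using v i by (simp_all add: xor_label_flip)
  show "?col v i \<noteq> ?col ?u j"
  proof (cases "low (xor_label lam v) i"; cases "low (xor_label lam ?u) j")
    assume low_v: "low (xor_label lam v) i" and low_u: "low (xor_label lam ?u) j"
    have "xor_label phi ?u \<noteq> xor_label phi ?u XOR phi j"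
      using low_nonzero[OF j low_u] by (metis xor.right_neutral xor_left_cancel_iff)
    then show ?thesis using u(2) low_v low_u by simp
  next
    assume high_v: "\<not> low (xor_label lam v) i" and high_u: "\<not> low (xor_label lam ?u) j"
    have "rank (xor_label lam ?u) \<noteq> rank (xor_label lam ?u XOR lam j)"
      using high_neq[OF j high_u] by metis
    then show ?thesis using u(3) high_v high_u by simp
  qed (use low_colour[OF _ v i] low_colour[OF _ u(1) j] high_colour in fastforce)+
qed

text \<open>For n + 1 = 2^p + m, the first 2^p - 1 directions carry the nonzero numbers below 2^p
  as labels, as in the Hamming code; the remaining m directions are always low and get the
  weights m XOR e with e < m.\<close>

lemma hypercube_direction_coloring_exists:
  assumes n: "n + 1 = 2 ^ p + m" and m: "m < 2 ^ p"
  shows "\<exists>col. hypercube_direction_coloring n (2 ^ p + (if m = 0 then 0 else m + 1)) col"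
proof -
  define P :: nat where "P = 2 ^ p - 1"
  have P: "n = P + m" "P < 2 ^ p" using n by (simp_all add: P_def)
  define lam where "lam i = (if i < P then i + 1 else 0)" for i
  define phi where "phi i = (if i < P then foreign_prefix m (i + 1) else m XOR (i - P))" for i
  define low where "low z i \<longleftrightarrow> (i < P \<longrightarrow> lower_direction m z (i + 1))" for z i
  have high: "i < P" "\<not> lower_direction m z (i + 1)" if "\<not> low z i" for z i
    using that by (auto simp: low_def)
  have phi_low: "phi i \<noteq> phi j" if "i < P" "\<not> j < P" "j < n" "low z i" for i j z
  proof -
    have "\<not> submask m (i + 1)" using that by (simp add: low_def lower_direction_def)
    moreover have "j - P < m" using that P by linarith
    ultimately show ?thesis using that foreign_prefix_ne_xor by (simp add: phi_def)
  qed
  let ?S = "if m = 0 then 0 else m + 1"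
  have "hypercube_direction_coloring n (2 ^ p + ?S)
    (\<lambda>v i. if low (xor_label lam v) i then xor_label phi v XOR phi i
           else 2 ^ p + slot m (xor_label lam v XOR lam i))"
  proof (rule direction_coloring_from_xor_labels)
    fix z i j assume ij: "i < n" "j < n" "i \<noteq> j" "low z i" "low z j"
    consider "i < P" "j < P" | "i < P" "\<not> j < P" | "\<not> i < P" "j < P" | "\<not> i < P" "\<not> j < P"
      by blast
    then show "phi i \<noteq> phi j"
    proof cases
      case 1
      then show ?thesis
        using ij foreign_prefix_inj[of m z "i + 1" "j + 1"] by (auto simp: phi_def low_def)
    next
      case 2
      then show ?thesis using phi_low ij by blast
    next
      case 3
      then show ?thesis using phi_low[of j i] ij by fastforce
    next
      case 4
      then show ?thesis using ij by (simp add: phi_def xor_left_cancel_iff)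
    qed
  next
    fix z i assume i: "i < n" "low z i"
    show "phi i \<noteq> 0"
    proof (cases "i < P")
      case True
      then show ?thesis
        using i foreign_prefix_nonzero by (auto simp: phi_def low_def lower_direction_def)
    next
      case False
      then have "i - P \<noteq> m" using i P by linarith
      then have "m XOR (i - P) \<noteq> m XOR m" by (metis xor_left_cancel_iff)
      then show ?thesis using False by (simp add: phi_def)
    qed
  next
    fix i assume "i < n"
    show "phi i < 2 ^ p"
    proof (cases "i < P")
      case True
      then show ?thesis using P foreign_prefix_le[of m "i + 1"] by (simp add: phi_def)
    next
      case False
      then have "i - P < 2 ^ p" using \<open>i < n\<close> P m by linarith
      then show ?thesis using False m by (simp add: phi_def xor_less_exp)
    qed
  next
    fix z i assume "i < n" "\<not> low z i"
    then show "slot m (z XOR lam i) \<noteq> slot m z"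
      using high slot_xor_inj[of m z "i + 1" 0] not_lower_direction_zero by (fastforce simp: lam_def)
  next
    fix z i j assume "i < n" "j < n" "i \<noteq> j" "\<not> low z i" "\<not> low z j"
    then show "slot m (z XOR lam i) \<noteq> slot m (z XOR lam j)"
      using high slot_xor_inj[of m z "i + 1" "j + 1"] by (auto simp: lam_def)
  next
    fix z i assume "i < n" "\<not> low z i"
    then show "slot m (z XOR lam i) < ?S"
      using high lower_direction_zero_mask slot_le[of m] by (fastforce simp: less_Suc_eq_le)
  qed
  then show ?thesis by blast
qed

section \<open>The incidence chromatic number of the hypercube\<close>

lemma hypercube_incidence_coloring_exists:
  "\<exists>c. is_incidence_coloring (hypercube_vertices n) (hypercube_edges n)
         (if \<exists>q::nat. n = 2 ^ q - 1 then n + 1 else n + 2) c"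
proof -
  obtain p where p: "2 ^ p \<le> n + 1" "n + 1 < 2 ^ Suc p"
    using ex_power_ivl1[of 2 "n + 1"] by auto
  define m where "m = n + 1 - 2 ^ p"
  have split: "n + 1 = 2 ^ p + m" "m < 2 ^ p" using p by (auto simp: m_def)
  have power_iff: "(\<exists>q::nat. n = 2 ^ q - 1) \<longleftrightarrow> m = 0"
  proof
    assume "\<exists>q::nat. n = 2 ^ q - 1"
    then obtain q :: nat where q: "n + 1 = 2 ^ q" by fastforce
    then have "p \<le> q" "q < Suc p" using p by (auto simp del: power_Suc)
    then show "m = 0" using q by (simp add: m_def)
  next
    assume "m = 0"
    then show "\<exists>q::nat. n = 2 ^ q - 1" using split by (intro exI[of _ p]) simp
  qed
  obtain col where "hypercube_direction_coloring n (2 ^ p + (if m = 0 then 0 else m + 1)) col"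
    using hypercube_direction_coloring_exists[OF split] by blast
  then have "\<exists>c. is_incidence_coloring (hypercube_vertices n) (hypercube_edges n)
               (2 ^ p + (if m = 0 then 0 else m + 1)) c"
    using incidence_coloring_of_direction_coloring by blast
  moreover have "2 ^ p + (if m = 0 then 0 else m + 1)
      = (if \<exists>q::nat. n = 2 ^ q - 1 then n + 1 else n + 2)"
    using split power_iff by simp
  ultimately show ?thesis by simp
qed

lemma incidence_chromatic_number_eqI:
  assumes "\<exists>c. is_incidence_coloring V E k c"
    and "\<And>k' c. is_incidence_coloring V E k' c \<Longrightarrow> k \<le> k'"
  shows "incidence_chromatic_number V E = k"
  unfolding incidence_chromatic_number_def using assms by (blast intro: Least_equality)

theorem mainTheorem4:
  fixes n :: nat
  assumes "n \<ge> 1"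
  shows "incidence_chromatic_number (hypercube_vertices n) (hypercube_edges n)
           = (if \<exists>m::nat. n = 2 ^ m - 1 then n + 1 else n + 2)"
proof (rule incidence_chromatic_number_eqI[OF hypercube_incidence_coloring_exists])
  fix k c assume "is_incidence_coloring (hypercube_vertices n) (hypercube_edges n) k c"
  then have col: "hypercube_direction_coloring n k (\<lambda>v i. c (v, {v, flip v i}))"
    by (rule direction_coloring_of_incidence_coloring)
  then have "n + 1 \<le> k" using assms by (intro direction_coloring_ge_succ)
  moreover have "\<exists>m::nat. n = 2 ^ m - 1" if "k = n + 1"
    using col that tight_direction_coloring_imp_exp_minus_one by blast
  ultimately show "(if \<exists>m::nat. n = 2 ^ m - 1 then n + 1 else n + 2) \<le> k" by force
qed

end
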